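(* Let $P(X,Y,Z)=X+\frac{1}{X}+Y+\frac{1}{Y}+Z+\frac{1}{Z}-2$ and let $D_P=\{(X,Y,Z)\in(\mathbb{C}^\times)^3 : P(X,Y,Z)=0,\ |X|=|Y|=1,\ |Z|>1\}$. Then \[ D_P=\{(e^{i\phi},e^{i\psi},Z(\phi,\psi)) : \cos\phi+\cos\psi<0\},\quad Z(\phi,\psi)=1-\cos\phi-\cos\psi+\sqrt{(1-\cos\phi-\cos\psi)^2-1}. \] *)

theory Defs
  imports "HOL-Analysis.Analysis"
begin

definition Ppoly :: "complex \<Rightarrow> complex \<Rightarrow> complex \<Rightarrow> complex" where
  "Ppoly X Y Z = X + 1 / X + Y + 1 / Y + Z + 1 / Z - 2"

definition D_P :: "(complex \<times> complex \<times> complex) set" where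
  "D_P = {(X, Y, Z). X \<noteq> 0 \<and> Y \<noteq> 0 \<and> Z \<noteq> 0 \<and> Ppoly X Y Z = 0
            \<and> norm X = 1 \<and> norm Y = 1 \<and> norm Z > 1}"

definition Zfun :: "real \<Rightarrow> real \<Rightarrow> real" where
  "Zfun \<phi> \<psi> = 1 - cos \<phi> - cos \<psi> + sqrt ((1 - cos \<phi> - cos \<psi>)\<^sup>2 - 1)"

end

theory Submission
  imports Defs
begin

text \<open>On the torus |X| = |Y| = 1 we have X + 1/X = 2 cos \<phi> and Y + 1/Y = 2 cos \<psi>, so P = 0
  becomes Z + 1/Z = 2a with a = 1 - cos \<phi> - cos \<psi> real and a \<ge> -1. Since
  Im (Z + 1/Z) = Im Z (1 - 1/|Z|^2), a root with |Z| > 1 is real, hence a root of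
  z^2 - 2az + 1. The two roots a \<plusminus> sqrt (a^2 - 1) have product 1; for a \<ge> -1 one of them
  lies outside the unit circle iff a > 1, and then it is the one with the plus sign.\<close>

lemma cis_add_inverse: "cis p + 1 / cis p = complex_of_real (2 * cos p)"
  by (simp add: complex_eq_iff divide_complex_def cis_inverse[symmetric] del: cis_inverse)

lemma unimodular_eq_cis_Arg:
  assumes "norm z = 1"
  shows "z = cis (Arg z)"
proof -
  have "z \<noteq> 0" using assms by auto
  then show ?thesis using assms cis_Arg[of z] by (simp add: sgn_div_norm)
qed

lemma Ppoly_eq_0_iff: "Ppoly X Y Z = 0 \<longleftrightarrow> Z + 1 / Z = 2 - (X + 1 / X) - (Y + 1 / Y)"
  unfolding Ppoly_def by (auto simp: algebra_simps)

lemma Im_add_inverse: "Im (z + 1 / z) = Im z * (1 - 1 / (norm z)\<^sup>2)"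
  by (simp add: Im_divide cmod_def algebra_simps)

lemma Reals_if_add_inverse_Reals:
  fixes z :: complex
  assumes "norm z \<noteq> 1" and "z + 1 / z \<in> \<real>"
  shows "z \<in> \<real>"
proof -
  have "1 - 1 / (norm z)\<^sup>2 \<noteq> 0"
    using assms(1) by (simp add: abs_square_eq_1)
  moreover have "Im z * (1 - 1 / (norm z)\<^sup>2) = 0"
    using assms(2) Im_add_inverse[of z] by (simp add: complex_is_Real_iff)
  ultimately have "Im z = 0"
    using mult_eq_0_iff by blast
  then show ?thesis
    by (simp add: complex_is_Real_iff)
qed

lemma real_add_inverse_eq_iff:
  fixes z a :: real
  assumes "a \<ge> -1"
  shows "\<bar>z\<bar> > 1 \<and> z + 1 / z = 2 * a \<longleftrightarrow> a > 1 \<and> z = a + sqrt (a\<^sup>2 - 1)"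
proof
  assume z: "\<bar>z\<bar> > 1 \<and> z + 1 / z = 2 * a"
  then have quadratic: "z * z + 1 = 2 * a * z"
    by (auto simp: field_simps)
  have z_gt_1: "z > 1"
  proof (rule ccontr)
    assume "\<not> z > 1"
    with z have "z < -1" by auto
    moreover have "(z + 1)\<^sup>2 > 0" using \<open>z < -1\<close> by simp
    then have "(a + 1) * z > 0"
      using quadratic by (simp add: power2_eq_square algebra_simps)
    ultimately show False
      using assms by (simp add: zero_less_mult_iff)
  qed
  have "(z - 1)\<^sup>2 > 0" using z_gt_1 by simp
  then have "(a - 1) * z > 0"
    using quadratic by (simp add: power2_eq_square algebra_simps)
  then have a_gt_1: "a > 1"
    using z_gt_1 by (simp add: zero_less_mult_iff)
  have "1 * 1 \<le> z * z"
    using z_gt_1 by (intro mult_mono) auto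
  then have "(z - a) * z \<ge> 0"
    using quadratic by (simp add: algebra_simps)
  then have "z - a \<ge> 0"
    using z_gt_1 by (simp add: zero_le_mult_iff)
  moreover have "(z - a)\<^sup>2 = a\<^sup>2 - 1"
    using quadratic by (simp add: power2_eq_square algebra_simps)
  ultimately have "z - a = sqrt (a\<^sup>2 - 1)"
    by (metis real_sqrt_abs abs_of_nonneg)
  with a_gt_1 show "a > 1 \<and> z = a + sqrt (a\<^sup>2 - 1)"
    by simp
next
  assume "a > 1 \<and> z = a + sqrt (a\<^sup>2 - 1)"
  then have a_gt_1: "a > 1" and z: "z = a + sqrt (a\<^sup>2 - 1)" by auto
  define s where "s = sqrt (a\<^sup>2 - 1)"
  have s_nonneg: "s \<ge> 0" and "s * s = a\<^sup>2 - 1"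
    using a_gt_1 by (simp_all add: s_def one_le_power)
  then have "1 / (a + s) = a - s"
    using a_gt_1 by (simp add: field_simps power2_eq_square)
  moreover have "z = a + s"
    using z by (simp add: s_def)
  ultimately show "\<bar>z\<bar> > 1 \<and> z + 1 / z = 2 * a"
    using a_gt_1 s_nonneg by simp
qed

lemma complex_add_inverse_eq_iff:
  fixes Z :: complex and a :: real
  assumes "a \<ge> -1"
  shows "norm Z > 1 \<and> Z + 1 / Z = complex_of_real (2 * a)
           \<longleftrightarrow> a > 1 \<and> Z = complex_of_real (a + sqrt (a\<^sup>2 - 1))"
proof -
  have of_real_add_inverse: "complex_of_real z + 1 / complex_of_real z = complex_of_real (z + 1 / z)"
    for z :: real
    by simp
  have "norm Z > 1 \<and> Z + 1 / Z = complex_of_real (2 * a)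
          \<longleftrightarrow> (\<exists>z. Z = complex_of_real z \<and> \<bar>z\<bar> > 1 \<and> z + 1 / z = 2 * a)"
  proof
    assume Z: "norm Z > 1 \<and> Z + 1 / Z = complex_of_real (2 * a)"
    then have "Z \<in> \<real>"
      using Reals_if_add_inverse_Reals[of Z] Reals_of_real by force
    then obtain z where z: "Z = complex_of_real z"
      by (auto elim: Reals_cases)
    with Z have "\<bar>z\<bar> > 1" and "complex_of_real (z + 1 / z) = complex_of_real (2 * a)"
      by (simp_all only: norm_of_real of_real_add_inverse)
    then show "\<exists>z. Z = complex_of_real z \<and> \<bar>z\<bar> > 1 \<and> z + 1 / z = 2 * a"
      using z of_real_eq_iff by blast
  next
    assume "\<exists>z. Z = complex_of_real z \<and> \<bar>z\<bar> > 1 \<and> z + 1 / z = 2 * a"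
    then show "norm Z > 1 \<and> Z + 1 / Z = complex_of_real (2 * a)"
      by (auto simp only: norm_of_real of_real_add_inverse)
  qed
  also have "\<dots> \<longleftrightarrow> a > 1 \<and> Z = complex_of_real (a + sqrt (a\<^sup>2 - 1))"
    using real_add_inverse_eq_iff[OF assms] by auto
  finally show ?thesis .
qed

lemma cis_cis_in_D_P_iff:
  "(cis p, cis q, Z) \<in> D_P \<longleftrightarrow> cos p + cos q < 0 \<and> Z = complex_of_real (Zfun p q)"
proof -
  define a where "a = 1 - cos p - cos q"
  have "a \<ge> -1"
    unfolding a_def using cos_le_one[of p] cos_le_one[of q] by linarith
  have "Ppoly (cis p) (cis q) Z = 0 \<longleftrightarrow> Z + 1 / Z = complex_of_real (2 * a)"
    by (simp add: Ppoly_eq_0_iff cis_add_inverse a_def)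
  then have "(cis p, cis q, Z) \<in> D_P \<longleftrightarrow> norm Z > 1 \<and> Z + 1 / Z = complex_of_real (2 * a)"
    unfolding D_P_def by auto
  also have "\<dots> \<longleftrightarrow> a > 1 \<and> Z = complex_of_real (a + sqrt (a\<^sup>2 - 1))"
    using complex_add_inverse_eq_iff[OF \<open>a \<ge> -1\<close>] .
  also have "\<dots> \<longleftrightarrow> cos p + cos q < 0 \<and> Z = complex_of_real (Zfun p q)"
    by (auto simp: a_def Zfun_def)
  finally show ?thesis .
qed

theorem lemma2p2:
  shows "D_P = {(cis \<phi>, cis \<psi>, complex_of_real (Zfun \<phi> \<psi>)) | \<phi> \<psi>. cos \<phi> + cos \<psi> < 0}"
proof (intro set_eqI iffI)
  fix t assume "t \<in> D_P"
  then obtain X Y Z where t: "t = (X, Y, Z)" and "norm X = 1" "norm Y = 1"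
    unfolding D_P_def by auto
  then have "t = (cis (Arg X), cis (Arg Y), Z)"
    using unimodular_eq_cis_Arg by auto
  with \<open>t \<in> D_P\<close> show "t \<in> {(cis \<phi>, cis \<psi>, complex_of_real (Zfun \<phi> \<psi>)) | \<phi> \<psi>. cos \<phi> + cos \<psi> < 0}"
    using cis_cis_in_D_P_iff by auto
next
  fix t assume "t \<in> {(cis \<phi>, cis \<psi>, complex_of_real (Zfun \<phi> \<psi>)) | \<phi> \<psi>. cos \<phi> + cos \<psi> < 0}"
  then show "t \<in> D_P"
    using cis_cis_in_D_P_iff by auto
qed

end
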